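(* Fix a positive $\epsilon\in\Gamma$. Let $d_0\in\mathrm{Der}_0(\mathfrak{L},\mathfrak{V})$ satisfy $d_0(L_\epsilon)=0$. Then $d_0(L_{-\epsilon})=0$.
   Context: Let $\Gamma$ be a nontrivial additive subgroup of $\mathbb{R}$, and let $s\in\mathbb{R}$ with $2s\in\Gamma$. The Lie superalgebra $\mathfrak{L}$ over $\mathbb{C}$ has basis $\{L_p,I_p,G_r,H_r\mid p\in\Gamma,\ r\in s+\Gamma\}$. Here $L_p,I_p$ are even and $G_r,H_r$ are odd. The nonzero super-brackets are $[L_p,L_q]=(p-q)L_{p+q}$, $[L_p,I_q]=(p-q)I_{p+q}$, $[L_p,G_r]=(\tfrac p2-r)G_{p+r}$, $[L_p,H_r]=(\tfrac p2-r)H_{p+r}$, $[G_r,G_t]=I_{r+t}$, $[I_p,G_r]=(p-2r)H_{p+r}$. All other brackets of basis elements vanish, apart from those forced by super-antisymmetry. Grading: - $\mathbb{Z}_s=\Gamma\cup(s+\Gamma)$, an additive subgroup of $\mathbb{R}$. - $\mathfrak{L}=\bigoplus_{p\in\mathbb{Z}_s}\mathfrak{L}_p$, where $\mathfrak{L}_p$ is spanned by those of $L_p,I_p,G_p,H_p$ that exist. - $\mathfrak{V}=\mathfrak{L}\otimes\mathfrak{L}$, with $\mathfrak{V}_r=\bigoplus_{p+q=r}\mathfrak{L}_p\otimes\mathfrak{L}_q$. - $\mathfrak{L}$ acts on $\mathfrak{V}$ by $x\circ(a\otimes b)=[x,a]\otimes b+(-1)^{[x][a]}a\otimes[x,b]$,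 where $[x]$ is parity. Derivations: - A homogeneous derivation of parity $[d]$ is a linear map $d:\mathfrak{L}\to\mathfrak{V}$ shifting parity by $[d]$ and satisfying $d([x,y])=(-1)^{[d][x]}x\circ d(y)-(-1)^{[y]([d]+[x])}y\circ d(x)$. - A derivation is a sum of an even and an odd one. - $\mathrm{Der}_0(\mathfrak{L},\mathfrak{V})$ is the set of derivations $d$ with $d(\mathfrak{L}_p)\subset\mathfrak{V}_{p}$ for all $p\in\mathbb{Z}_s$. *)

theory Defs
  imports Complex_Main
begin

text \<open>Elements of the superalgebra are finitely supported complex-valued functions on
  basis elements; elements of the tensor square are finitely supported functions on
  pairs of basis elements (the tensor product of free vector spaces).\<close>

datatype bt = L | I | G | H

type_synonym bas = "bt \<times> real"
type_synonym lvec = "bas \<Rightarrow> complex"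
type_synonym vvec = "bas \<times> bas \<Rightarrow> complex"

definition valid :: "real set \<Rightarrow> real \<Rightarrow> bas \<Rightarrow> bool" where
  "valid \<Gamma> s b = (case fst b of
      L \<Rightarrow> snd b \<in> \<Gamma> | I \<Rightarrow> snd b \<in> \<Gamma>
    | G \<Rightarrow> snd b - s \<in> \<Gamma> | H \<Rightarrow> snd b - s \<in> \<Gamma>)"

fun par :: "bt \<Rightarrow> nat" where
  "par L = 0" | "par I = 0" | "par G = 1" | "par H = 1"

definition vec :: "bas \<Rightarrow> lvec" where
  "vec b = (\<lambda>c. if c = b then 1 else 0)"

definition cf :: "real \<Rightarrow> bas \<Rightarrow> lvec" where
  "cf r b = (\<lambda>c. if c = b then complex_of_real r else 0)"

text \<open>Super-bracket of basis elements (including those forced by super-antisymmetry).\<close>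
fun br :: "bas \<Rightarrow> bas \<Rightarrow> lvec" where
  "br (L,p) (L,q) = cf (p - q) (L, p + q)"
| "br (L,p) (I,q) = cf (p - q) (I, p + q)"
| "br (I,q) (L,p) = cf (-(p - q)) (I, p + q)"
| "br (L,p) (G,r) = cf (p/2 - r) (G, p + r)"
| "br (G,r) (L,p) = cf (-(p/2 - r)) (G, p + r)"
| "br (L,p) (H,r) = cf (p/2 - r) (H, p + r)"
| "br (H,r) (L,p) = cf (-(p/2 - r)) (H, p + r)"
| "br (G,r) (G,t) = cf 1 (I, r + t)"
| "br (I,p) (G,r) = cf (p - 2*r) (H, p + r)"
| "br (G,r) (I,p) = cf (-(p - 2*r)) (H, p + r)"
| "br _ _ = (\<lambda>_. 0)"

definition sgnc :: "nat \<Rightarrow> complex" where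
  "sgnc n = (-1) ^ n"

definition tens :: "lvec \<Rightarrow> lvec \<Rightarrow> vvec" where
  "tens u v = (\<lambda>(a,b). u a * v b)"

definition lin_ext :: "(bas \<Rightarrow> vvec) \<Rightarrow> lvec \<Rightarrow> vvec" where
  "lin_ext d v = (\<lambda>z. \<Sum>b\<in>{b. v b \<noteq> 0}. v b * d b z)"

definition act :: "bas \<Rightarrow> vvec \<Rightarrow> vvec" where
  "act x w = (\<lambda>z. \<Sum>ab\<in>{ab. w ab \<noteq> 0}. w ab *
      (tens (br x (fst ab)) (vec (snd ab)) z
       + sgnc (par (fst x) * par (fst (fst ab))) * tens (vec (fst ab)) (br x (snd ab)) z))"

text \<open>Homogeneous derivation of parity e (e = 0 even, e = 1 odd), given by its values
  on basis elements (a linear map is determined by them).\<close>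
definition homog_der :: "real set \<Rightarrow> real \<Rightarrow> nat \<Rightarrow> (bas \<Rightarrow> vvec) \<Rightarrow> bool" where
  "homog_der \<Gamma> s e d =
    ((\<forall>b. valid \<Gamma> s b \<longrightarrow> finite {w. d b w \<noteq> 0}
        \<and> (\<forall>a c. d b (a,c) \<noteq> 0 \<longrightarrow> valid \<Gamma> s a \<and> valid \<Gamma> s c
              \<and> (par (fst a) + par (fst c)) mod 2 = (par (fst b) + e) mod 2))
     \<and> (\<forall>x y. valid \<Gamma> s x \<longrightarrow> valid \<Gamma> s y \<longrightarrow>
          lin_ext d (br x y) =
            (\<lambda>z. sgnc (e * par (fst x)) * act x (d y) z
                 - sgnc (par (fst y) * (e + par (fst x))) * act y (d x) z)))"

definition Der0 :: "real set \<Rightarrow> real \<Rightarrow> (bas \<Rightarrow> vvec) set" where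
  "Der0 \<Gamma> s = {d. (\<exists>d0 d1. homog_der \<Gamma> s 0 d0 \<and> homog_der \<Gamma> s 1 d1
        \<and> (\<forall>b. valid \<Gamma> s b \<longrightarrow> d b = (\<lambda>z. d0 b z + d1 b z)))
     \<and> (\<forall>b a c. valid \<Gamma> s b \<longrightarrow> d b (a,c) \<noteq> 0 \<longrightarrow> snd a + snd c = snd b)}"

end

theory Submission
  imports Defs
begin

text \<open>On the Witt subalgebra spanned by the \<open>L\<^sub>p\<close>, a degree-preserving derivation \<open>d\<close> is a
  1-cocycle with values in \<open>L \<otimes> L\<close>, where \<open>L\<^sub>p\<close> moves each tensor factor \<open>X\<^sub>x\<close> to
  \<open>c X\<^sub>p\<^sub>+\<^sub>x\<close> with \<open>c = p - x\<close> for \<open>X \<in> {L, I}\<close> and \<open>c = p/2 - x\<close> for \<open>X \<in> {G, H}\<close>.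
  Every \<open>L\<^sub>q\<close> kills \<open>d(L\<^sub>0)\<close>, which forces \<open>d(L\<^sub>0) = 0\<close>; then the bracket
  \<open>[L\<^sub>\<epsilon>, L\<^sub>-\<^sub>\<epsilon>] = 2\<epsilon> L\<^sub>0\<close> shows that \<open>L\<^sub>\<epsilon>\<close> kills \<open>d(L\<^sub>-\<^sub>\<epsilon>)\<close>. As \<open>d(L\<^sub>-\<^sub>\<epsilon>)\<close> is
  finitely supported, each chain \<open>(T, \<alpha> + n\<epsilon>) \<otimes> (T', \<beta> - n\<epsilon>)\<close> of its support ends where a
  structure constant of \<open>L\<^sub>\<epsilon>\<close> vanishes. This excludes tensors of mixed parity and confines
  the rest to a box of three or four positions per pair of types, on which a few further
  instances of the cocycle identity, involving \<open>d(L\<^sub>\<plusminus>\<^sub>2\<^sub>\<epsilon>)\<close>, leave only the zero solution.\<close>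

definition L_coeff :: "bt \<Rightarrow> real \<Rightarrow> real \<Rightarrow> real" where
  "L_coeff T p x = (if par T = 0 then p else p / 2) - x"

lemma br_L_left: "br (L,p) (T,x) = cf (L_coeff T p x) (T, p + x)"
  by (cases T) (simp_all add: L_coeff_def)

lemma par_cases: "par T = 0 \<or> par T = 1"
  by (cases T) simp_all

lemma L_coeff_eq_0_iff: "L_coeff T p x = 0 \<longleftrightarrow> x = (if par T = 0 then p else p / 2)"
  by (auto simp: L_coeff_def)

definition L_act :: "real \<Rightarrow> vvec \<Rightarrow> vvec" where
  "L_act p w = (\<lambda>((T,a),(T',b)).
      of_real (L_coeff T p (a - p)) * w ((T, a - p), (T', b))
    + of_real (L_coeff T' p (b - p)) * w ((T, a), (T', b - p)))"

lemma L_act_apply: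
  "L_act p w ((T,a),(T',b)) =
      of_real (L_coeff T p (a - p)) * w ((T, a - p), (T', b))
    + of_real (L_coeff T' p (b - p)) * w ((T, a), (T', b - p))"
  by (simp add: L_act_def)

lemma L_act_zero: "L_act p (\<lambda>_. 0) = (\<lambda>_. 0)"
  by (auto simp: fun_eq_iff L_act_def)

lemma L_act_add: "L_act p (\<lambda>z. v z + w z) z = L_act p v z + L_act p w z"
  by (cases z) (auto simp: L_act_def algebra_simps)

lemma act_L_eq_L_act:
  assumes "finite {z. w z \<noteq> 0}"
  shows "act (L,p) w = L_act p w"
proof
  fix z :: "bas \<times> bas"
  obtain T a T' b where z: "z = ((T,a),(T',b))" by (metis prod.exhaust)
  let ?S = "{z. w z \<noteq> 0}"
  have first: "w ab * tens (br (L,p) (fst ab)) (vec (snd ab)) z =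
      (if ab = ((T, a - p), (T', b)) then of_real (L_coeff T p (a - p)) * w ab else 0)" for ab
    by (cases ab) (auto simp: z tens_def br_L_left cf_def vec_def split: if_splits)
  have second: "w ab * tens (vec (fst ab)) (br (L,p) (snd ab)) z =
      (if ab = ((T, a), (T', b - p)) then of_real (L_coeff T' p (b - p)) * w ab else 0)" for ab
    by (cases ab) (auto simp: z tens_def br_L_left cf_def vec_def split: if_splits)
  have "act (L,p) w z =
      (\<Sum>ab\<in>?S. w ab * tens (br (L,p) (fst ab)) (vec (snd ab)) z)
    + (\<Sum>ab\<in>?S. w ab * tens (vec (fst ab)) (br (L,p) (snd ab)) z)"
    by (simp add: act_def sgnc_def distrib_left sum.distrib)
  also have "\<dots> = L_act p w z"
    unfolding first second using assms by (auto simp: z L_act_apply)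
  finally show "act (L,p) w z = L_act p w z" .
qed

lemma lin_ext_cf: "lin_ext d (cf r b) = (\<lambda>z. of_real r * d b z)"
  by (cases "r = 0") (auto simp: lin_ext_def cf_def)

lemma homog_der_finite_support:
  assumes "homog_der \<Gamma> s e D" and "valid \<Gamma> s b"
  shows "finite {z. D b z \<noteq> 0}"
  using assms(1)[unfolded homog_der_def, THEN conjunct1, rule_format, OF assms(2)] by blast

lemma homog_der_L_cocycle:
  assumes der: "homog_der \<Gamma> s e D" and p: "p \<in> \<Gamma>" and q: "q \<in> \<Gamma>"
  shows "of_real (p - q) * D (L, p + q) z = L_act p (D (L,q)) z - L_act q (D (L,p)) z"
proof -
  have valid: "valid \<Gamma> s (L,p)" "valid \<Gamma> s (L,q)"
    using p q by (simp_all add: valid_def)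
  have "lin_ext D (br (L,p) (L,q)) = (\<lambda>z. act (L,p) (D (L,q)) z - act (L,q) (D (L,p)) z)"
    using der[unfolded homog_der_def, THEN conjunct2, rule_format, OF valid] by (simp add: sgnc_def)
  then have "(\<lambda>z. of_real (p - q) * D (L, p + q) z) = (\<lambda>z. L_act p (D (L,q)) z - L_act q (D (L,p)) z)"
    using homog_der_finite_support[OF der valid(1)] homog_der_finite_support[OF der valid(2)]
    by (simp add: lin_ext_cf act_L_eq_L_act)
  then show ?thesis by (rule fun_cong)
qed

lemma nat_set_last:
  assumes "finite {n::nat. P n}" and "P 0"
  obtains n where "P n" and "\<not> P (Suc n)"
proof -
  let ?n = "Max {n. P n}"
  have "P ?n" using Max_in[OF assms(1)] assms(2) by blast
  moreover have "\<not> P (Suc ?n)" using Max_ge[OF assms(1), of "Suc ?n"] by auto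
  ultimately show thesis using that by blast
qed

lemma L_act_kernel_top:
  fixes w :: vvec and q a b :: real
  assumes fin: "finite {z. w z \<noteq> 0}" and q: "0 < q" and ker: "\<And>z. L_act q w z = 0"
    and nz: "w ((T,a),(T',b)) \<noteq> 0"
  obtains n :: nat where "L_coeff T q (a + n * q) = 0" and "w ((T, a + n * q), (T', b - n * q)) \<noteq> 0"
proof -
  define chain where "chain n = ((T, a + real n * q), (T', b - real n * q))" for n :: nat
  have "inj chain" using q by (auto simp: inj_def chain_def)
  then have "finite {n. w (chain n) \<noteq> 0}"
    using finite_vimageI[OF fin] by (simp add: vimage_def)
  then obtain n where top: "w (chain n) \<noteq> 0" "w (chain (Suc n)) = 0"
    using nat_set_last[of "\<lambda>n. w (chain n) \<noteq> 0"] nz by (auto simp: chain_def)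
  have "L_act q w ((T, a + n * q + q), (T', b - n * q)) = of_real (L_coeff T q (a + n * q)) * w (chain n)"
    using top(2) by (simp add: L_act_apply chain_def algebra_simps)
  then show thesis using that ker top(1) by (simp add: chain_def)
qed

definition tswap :: "vvec \<Rightarrow> vvec" where
  "tswap w = (\<lambda>(x,y). w (y,x))"

lemma L_act_tswap: "L_act p (tswap w) = tswap (L_act p w)"
  by (auto simp: fun_eq_iff L_act_def tswap_def)

lemma L_act_kernel_bottom:
  fixes w :: vvec and q a b :: real
  assumes fin: "finite {z. w z \<noteq> 0}" and q: "0 < q" and ker: "\<And>z. L_act q w z = 0"
    and nz: "w ((T,a),(T',b)) \<noteq> 0"
  obtains n :: nat where "L_coeff T' q (b + n * q) = 0"
proof -
  have "{z. tswap w z \<noteq> 0} = prod.swap ` {z. w z \<noteq> 0}"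
    by (auto simp: tswap_def image_iff)
  then have "finite {z. tswap w z \<noteq> 0}" using fin by simp
  moreover have "L_act q (tswap w) z = 0" for z
    unfolding L_act_tswap by (simp add: tswap_def ker split: prod.split)
  moreover have "tswap w ((T',b),(T,a)) \<noteq> 0" using nz by (simp add: tswap_def)
  ultimately show thesis using L_act_kernel_top q that by blast
qed

text \<open>\<open>Y k m\<close> stands for the coefficient of \<open>(T, m\<epsilon>) \<otimes> (T', (k - m)\<epsilon>)\<close> in \<open>d(L\<^sub>k\<^sub>\<epsilon>)\<close> for
  factors of type \<open>L\<close> or \<open>I\<close>; the eleven instances of the cocycle identity used below were
  found by linear algebra over the box.\<close>

lemma adjoint_block_vanishes:
  fixes Y :: "real \<Rightarrow> real \<Rightarrow> complex"
  assumes cocycle: "\<And>k l m. k \<in> {-2,-1,1,2} \<Longrightarrow> l \<in> {-2,-1,1,2} \<Longrightarrow>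
      of_real (k-l) * Y (k+l) m = of_real (2*k-m) * Y l (m-k) + of_real (k-l+m) * Y l m
        - of_real (2*l-m) * Y k (m-l) - of_real (l-k+m) * Y k m"
    and Y0: "\<And>m. Y 0 m = 0" and Y1: "\<And>m. Y 1 m = 0"
    and box: "\<And>m. m \<notin> {-2,-1,0,1} \<Longrightarrow> Y (-1) m = 0"
  shows "Y (-1) m = 0"
proof -
  note eqs = cocycle[of "-2" 1 "-4"] cocycle[of "-2" 1 "-3"] cocycle[of "-2" 1 "-2"]
    cocycle[of "-2" 2 "-3"] cocycle[of "-2" 2 "-2"]
    cocycle[of "-1" 1 "-1"] cocycle[of "-1" 1 0] cocycle[of "-1" 1 1]
    cocycle[of "-1" 2 "-3"] cocycle[of "-1" 2 "-2"] cocycle[of "-1" 2 "-1"]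
  have "Y (-1) 1 = 0" "Y (-1) 0 = 0" "Y (-1) (-1) = 0" "Y (-1) (-2) = 0"
    using eqs[simplified] by (simp_all add: Y0 Y1 box) algebra+
  then show ?thesis
    using box by (cases "m \<in> {-2,-1,0,1}") auto
qed

text \<open>The same for factors of type \<open>G\<close> or \<open>H\<close>, with positions counted in units of \<open>\<epsilon>/2\<close>.\<close>

lemma half_density_block_vanishes:
  fixes Y :: "real \<Rightarrow> real \<Rightarrow> complex"
  assumes cocycle: "\<And>k l m. k \<in> {-2,-1,1,2} \<Longrightarrow> l \<in> {-2,-1,1,2} \<Longrightarrow>
      of_real (2*(k-l)) * Y (k+l) m = of_real (3*k-m) * Y l (m-2*k) + of_real (k-2*l+m) * Y l m
        - of_real (3*l-m) * Y k (m-2*l) - of_real (l-2*k+m) * Y k m"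
    and Y0: "\<And>m. Y 0 m = 0" and Y1: "\<And>m. Y 1 m = 0"
    and box: "\<And>m. m \<notin> {-3,-1,1} \<Longrightarrow> Y (-1) m = 0"
  shows "Y (-1) m = 0"
proof -
  note eqs = cocycle[of "-2" 1 "-3"] cocycle[of "-2" 1 "-1"] cocycle[of "-2" 1 1]
    cocycle[of "-2" 2 "-1"] cocycle[of "-2" 2 1]
    cocycle[of "-1" 1 "-1"] cocycle[of "-1" 1 1]
    cocycle[of "-1" 2 "-1"] cocycle[of "-1" 2 1] cocycle[of "-1" 2 3]
  have "Y (-1) 1 = 0" "Y (-1) (-1) = 0" "Y (-1) (-3) = 0"
    using eqs[simplified] by (simp_all add: Y0 Y1 box) algebra+
  then show ?thesis
    using box by (cases "m \<in> {-3,-1,1}") auto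
qed

locale Witt_derivation =
  fixes \<Gamma> :: "real set" and D :: "bas \<Rightarrow> vvec"
  assumes add_closed: "\<And>p q. p \<in> \<Gamma> \<Longrightarrow> q \<in> \<Gamma> \<Longrightarrow> p + q \<in> \<Gamma>"
    and uminus_closed: "\<And>p. p \<in> \<Gamma> \<Longrightarrow> - p \<in> \<Gamma>"
    and finite_support: "\<And>p. p \<in> \<Gamma> \<Longrightarrow> finite {z. D (L,p) z \<noteq> 0}"
    and degree: "\<And>p T a T' b. p \<in> \<Gamma> \<Longrightarrow> D (L,p) ((T,a),(T',b)) \<noteq> 0 \<Longrightarrow> a + b = p"
    and cocycle: "\<And>p q z. p \<in> \<Gamma> \<Longrightarrow> q \<in> \<Gamma> \<Longrightarrow>
      of_real (p - q) * D (L, p + q) z = L_act p (D (L,q)) z - L_act q (D (L,p)) z"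

lemma Der0_Witt_derivation:
  assumes "d \<in> Der0 \<Gamma> s"
    and "\<forall>x\<in>\<Gamma>. \<forall>y\<in>\<Gamma>. x + y \<in> \<Gamma>" and "\<forall>x\<in>\<Gamma>. - x \<in> \<Gamma>"
  shows "Witt_derivation \<Gamma> d"
proof -
  from assms(1) obtain d0 d1 where der0: "homog_der \<Gamma> s 0 d0" and der1: "homog_der \<Gamma> s 1 d1"
    and sum: "\<And>b. valid \<Gamma> s b \<Longrightarrow> d b = (\<lambda>z. d0 b z + d1 b z)"
    and degree: "\<And>b a c. valid \<Gamma> s b \<Longrightarrow> d b (a,c) \<noteq> 0 \<Longrightarrow> snd a + snd c = snd b"
    unfolding Der0_def by blast
  have valid: "valid \<Gamma> s (L,p) \<longleftrightarrow> p \<in> \<Gamma>" for p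
    by (simp add: valid_def)
  have split: "d (L,p) z = d0 (L,p) z + d1 (L,p) z" if "p \<in> \<Gamma>" for p z
    using sum[of "(L,p)"] that valid by simp
  show ?thesis
  proof
    fix p assume p: "p \<in> \<Gamma>"
    have "{z. d (L,p) z \<noteq> 0} \<subseteq> {z. d0 (L,p) z \<noteq> 0} \<union> {z. d1 (L,p) z \<noteq> 0}"
      using split[OF p] by auto
    then show "finite {z. d (L,p) z \<noteq> 0}"
      using homog_der_finite_support[OF der0] homog_der_finite_support[OF der1] p valid
      by (meson finite_Un finite_subset)
  next
    fix p q z assume p: "p \<in> \<Gamma>" and q: "q \<in> \<Gamma>"
    have "d (L,q) = (\<lambda>z. d0 (L,q) z + d1 (L,q) z)" "d (L,p) = (\<lambda>z. d0 (L,p) z + d1 (L,p) z)"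
      using split p q by auto
    then show "of_real (p - q) * d (L, p + q) z = L_act p (d (L,q)) z - L_act q (d (L,p)) z"
      using homog_der_L_cocycle[OF der0 p q, of z] homog_der_L_cocycle[OF der1 p q, of z]
        split[of "p + q" z] assms(2) p q
      by (simp add: L_act_add distrib_left)
  next
    fix p T a T' b assume "p \<in> \<Gamma>" "d (L,p) ((T,a),(T',b)) \<noteq> 0"
    then show "a + b = p" using degree valid by fastforce
  qed (use assms(2,3) in blast)+
qed

context Witt_derivation
begin

lemma L_act_0_D:
  assumes "p \<in> \<Gamma>"
  shows "L_act 0 (D (L,p)) z = - of_real p * D (L,p) z"
proof -
  obtain T a T' b where z: "z = ((T,a),(T',b))" by (metis prod.exhaust)
  have "L_act 0 (D (L,p)) z = - of_real (a + b) * D (L,p) z"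
    by (simp add: z L_act_apply L_coeff_def algebra_simps)
  moreover have "a + b = p" if "D (L,p) z \<noteq> 0" using degree[OF assms] that z by blast
  ultimately show ?thesis by (cases "D (L,p) z = 0") auto
qed

lemma L_act_D_L0: "0 \<in> \<Gamma> \<Longrightarrow> q \<in> \<Gamma> \<Longrightarrow> L_act q (D (L,0)) z = 0"
  using cocycle[of 0 q z] L_act_0_D[of q z] by simp

text \<open>The tops of the \<open>L\<^sub>\<epsilon>\<close>-chain and then of the \<open>L\<^sub>2\<^sub>\<epsilon>\<close>-chain through a nonzero coefficient
  of \<open>d(L\<^sub>0)\<close> are incompatible.\<close>

lemma D_L0_eq_0:
  assumes eps: "\<epsilon> \<in> \<Gamma>" "0 < \<epsilon>"
  shows "D (L,0) z = 0"
proof (rule ccontr)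
  assume nz: "D (L,0) z \<noteq> 0"
  obtain T a T' b where z: "z = ((T,a),(T',b))" by (metis prod.exhaust)
  have zero: "0 \<in> \<Gamma>" using add_closed[OF eps(1) uminus_closed[OF eps(1)]] by simp
  have eps2: "2 * \<epsilon> \<in> \<Gamma>" using add_closed[OF eps(1) eps(1)] by simp
  note fin = finite_support[OF zero]
  obtain n :: nat where n: "L_coeff T \<epsilon> (a + n * \<epsilon>) = 0" and nz': "D (L,0) ((T, a + n * \<epsilon>), (T', b - n * \<epsilon>)) \<noteq> 0"
    using L_act_kernel_top[OF fin eps(2) L_act_D_L0[OF zero eps(1)]] nz z by blast
  obtain m :: nat where m: "L_coeff T (2 * \<epsilon>) (a + n * \<epsilon> + m * (2 * \<epsilon>)) = 0"
    using L_act_kernel_top[OF fin _ L_act_D_L0[OF zero eps2] nz'] eps(2) by auto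
  define c where "c = (if par T = 0 then \<epsilon> else \<epsilon> / 2)"
  have "a + n * \<epsilon> = c" and "a + n * \<epsilon> + m * (2 * \<epsilon>) = 2 * c"
    using n m by (auto simp: L_coeff_eq_0_iff c_def)
  then have mc: "real m * (2 * \<epsilon>) = c" by simp
  have c: "0 < c" "c < 2 * \<epsilon>" using eps(2) by (auto simp: c_def)
  show False
  proof (cases m)
    case 0
    then show False using mc c by simp
  next
    case (Suc k)
    then have "1 * (2 * \<epsilon>) \<le> real m * (2 * \<epsilon>)"
      using eps(2) by (intro mult_right_mono) auto
    then show False using mc c by simp
  qed
qed

context
  fixes \<epsilon> :: real
  assumes eps_in: "\<epsilon> \<in> \<Gamma>" and eps_pos: "0 < \<epsilon>" and D_eps: "D (L,\<epsilon>) = (\<lambda>_. 0)"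
begin

lemma minus_eps_in: "- \<epsilon> \<in> \<Gamma>"
  using uminus_closed[OF eps_in] .

lemma L_act_eps_D_minus_eps: "L_act \<epsilon> (D (L,-\<epsilon>)) z = 0"
  using cocycle[OF eps_in minus_eps_in, of z] D_L0_eq_0[OF eps_in eps_pos]
  by (simp add: D_eps L_act_zero)

lemma D_minus_eps_support:
  assumes "D (L,-\<epsilon>) ((T,\<alpha>),(T',\<beta>)) \<noteq> 0"
  obtains n m :: nat
  where "\<alpha> + n * \<epsilon> = (if par T = 0 then \<epsilon> else \<epsilon> / 2)"
    and "\<beta> + m * \<epsilon> = (if par T' = 0 then \<epsilon> else \<epsilon> / 2)"
    and "\<alpha> + \<beta> = - \<epsilon>"
proof -
  note fin = finite_support[OF minus_eps_in]
  obtain n :: nat where "L_coeff T \<epsilon> (\<alpha> + n * \<epsilon>) = 0"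
    using L_act_kernel_top[OF fin eps_pos L_act_eps_D_minus_eps assms] by blast
  moreover obtain m :: nat where "L_coeff T' \<epsilon> (\<beta> + m * \<epsilon>) = 0"
    using L_act_kernel_bottom[OF fin eps_pos L_act_eps_D_minus_eps assms] by blast
  ultimately show thesis
    using that degree[OF minus_eps_in assms] by (simp add: L_coeff_eq_0_iff)
qed

lemma D_minus_eps_mixed:
  assumes "par T \<noteq> par T'"
  shows "D (L,-\<epsilon>) ((T,\<alpha>),(T',\<beta>)) = 0"
proof (rule ccontr)
  assume "D (L,-\<epsilon>) ((T,\<alpha>),(T',\<beta>)) \<noteq> 0"
  then obtain n m :: nat
    where "\<alpha> + n * \<epsilon> = (if par T = 0 then \<epsilon> else \<epsilon> / 2)"
      and "\<beta> + m * \<epsilon> = (if par T' = 0 then \<epsilon> else \<epsilon> / 2)" and "\<alpha> + \<beta> = - \<epsilon>"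
    by (rule D_minus_eps_support)
  with assms par_cases[of T] par_cases[of T'] have "real (2 * (n + m)) * \<epsilon> = 5 * \<epsilon>"
    by (auto simp: algebra_simps)
  then have "2 * (n + m) = 5" using eps_pos by simp
  then show False by presburger
qed

lemma multiple_eps_in: "k \<in> {-2,-1,1,2} \<Longrightarrow> k * \<epsilon> \<in> \<Gamma>"
  using eps_in minus_eps_in add_closed[OF eps_in eps_in] add_closed[OF minus_eps_in minus_eps_in]
  by (auto simp: algebra_simps)

lemma D_minus_eps_even_box:
  assumes "par T = 0" and "par T' = 0" and "D (L,-\<epsilon>) ((T, m * \<epsilon>), (T', (-1 - m) * \<epsilon>)) \<noteq> 0"
  shows "m \<in> {-2,-1,0,1}"
proof -
  obtain n n' :: nat where "m * \<epsilon> + n * \<epsilon> = \<epsilon>" "(-1 - m) * \<epsilon> + n' * \<epsilon> = \<epsilon>"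
    by (rule D_minus_eps_support[OF assms(3)]) (simp_all add: assms(1,2))
  then have "(m + n) * \<epsilon> = 1 * \<epsilon>" "(real n' - 1 - m) * \<epsilon> = 1 * \<epsilon>"
    by (simp_all add: algebra_simps)
  then have mn: "m + n = 1" and "real n' - 1 - m = 1"
    using eps_pos by simp_all
  then have "n + n' = (3::nat)" by linarith
  then have "n \<in> {0,1,2,3}" by auto
  then show ?thesis using mn by auto
qed

lemma D_minus_eps_odd_box:
  assumes "par T = 1" and "par T' = 1"
    and "D (L,-\<epsilon>) ((T, m * (\<epsilon> / 2)), (T', (-2 - m) * (\<epsilon> / 2))) \<noteq> 0"
  shows "m \<in> {-3,-1,1}"
proof -
  obtain n n' :: nat where "m * (\<epsilon> / 2) + n * \<epsilon> = \<epsilon> / 2" "(-2 - m) * (\<epsilon> / 2) + n' * \<epsilon> = \<epsilon> / 2"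
    by (rule D_minus_eps_support[OF assms(3)]) (simp_all add: assms(1,2))
  then have "(m + 2 * n) * \<epsilon> = 1 * \<epsilon>" "(2 * real n' - 2 - m) * \<epsilon> = 1 * \<epsilon>"
    by (simp_all add: field_simps)
  then have mn: "m + 2 * n = 1" and "2 * real n' - 2 - m = 1"
    using eps_pos by simp_all
  then have "n + n' = (2::nat)" by linarith
  then have "n \<in> {0,1,2}" by auto
  then show ?thesis using mn by auto
qed

lemma D_minus_eps_even_block:
  assumes T: "par T = 0" and T': "par T' = 0"
  shows "D (L,-\<epsilon>) ((T,\<alpha>),(T',\<beta>)) = 0"
proof -
  define Y where "Y k m = D (L, k * \<epsilon>) ((T, m * \<epsilon>), (T', (k - m) * \<epsilon>))" for k m
  have "Y (-1) (\<alpha> / \<epsilon>) = 0"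
  proof (rule adjoint_block_vanishes)
    fix k l m :: real
    assume "k \<in> {-2,-1,1,2}" "l \<in> {-2,-1,1,2}"
    then have "k * \<epsilon> \<in> \<Gamma>" "l * \<epsilon> \<in> \<Gamma>" by (simp_all add: multiple_eps_in)
    then have "of_real \<epsilon> * (of_real (k - l) * Y (k + l) m) = of_real \<epsilon> *
        (of_real (2*k-m) * Y l (m-k) + of_real (k-l+m) * Y l m
          - of_real (2*l-m) * Y k (m-l) - of_real (l-k+m) * Y k m)"
      using cocycle[of "k * \<epsilon>" "l * \<epsilon>" "((T, m * \<epsilon>), (T', (k + l - m) * \<epsilon>))"]
      by (simp add: Y_def L_act_apply L_coeff_def T T' algebra_simps)
    then show "of_real (k - l) * Y (k + l) m = of_real (2*k-m) * Y l (m-k) + of_real (k-l+m) * Y l m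
          - of_real (2*l-m) * Y k (m-l) - of_real (l-k+m) * Y k m"
      using eps_pos by simp
  next
    show "Y 0 m = 0" "Y 1 m = 0" for m
      by (simp_all add: Y_def D_L0_eq_0[OF eps_in eps_pos] D_eps)
  next
    show "Y (-1) m = 0" if "m \<notin> {-2,-1,0,1}" for m
      using D_minus_eps_even_box[OF T T', of m] that by (auto simp: Y_def)
  qed
  show ?thesis
  proof (cases "D (L,-\<epsilon>) ((T,\<alpha>),(T',\<beta>)) = 0")
    case False
    have "(-1 - \<alpha> / \<epsilon>) * \<epsilon> = - \<epsilon> - \<alpha>" using eps_pos by (simp add: algebra_simps)
    then have "\<beta> = (-1 - \<alpha> / \<epsilon>) * \<epsilon>" using degree[OF minus_eps_in False] by linarith
    then show ?thesis using \<open>Y (-1) (\<alpha> / \<epsilon>) = 0\<close> eps_pos by (simp add: Y_def)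
  qed simp
qed

lemma D_minus_eps_odd_block:
  assumes T: "par T = 1" and T': "par T' = 1"
  shows "D (L,-\<epsilon>) ((T,\<alpha>),(T',\<beta>)) = 0"
proof -
  define \<delta> where "\<delta> = \<epsilon> / 2"
  have \<delta>: "\<epsilon> = 2 * \<delta>" "0 < \<delta>" using eps_pos by (simp_all add: \<delta>_def)
  define Y where "Y k m = D (L, k * \<epsilon>) ((T, m * \<delta>), (T', (2 * k - m) * \<delta>))" for k m
  have "Y (-1) (\<alpha> / \<delta>) = 0"
  proof (rule half_density_block_vanishes)
    fix k l m :: real
    assume "k \<in> {-2,-1,1,2}" "l \<in> {-2,-1,1,2}"
    then have "k * (2 * \<delta>) \<in> \<Gamma>" "l * (2 * \<delta>) \<in> \<Gamma>" using multiple_eps_in \<delta>(1) by simp_all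
    then have "of_real \<delta> * (of_real (2*(k-l)) * Y (k + l) m) = of_real \<delta> *
        (of_real (3*k-m) * Y l (m-2*k) + of_real (k-2*l+m) * Y l m
          - of_real (3*l-m) * Y k (m-2*l) - of_real (l-2*k+m) * Y k m)"
      using cocycle[of "k * (2 * \<delta>)" "l * (2 * \<delta>)" "((T, m * \<delta>), (T', (2 * (k + l) - m) * \<delta>))"]
      by (simp add: Y_def \<delta>(1) L_act_apply L_coeff_def T T' algebra_simps)
    then show "of_real (2*(k-l)) * Y (k + l) m = of_real (3*k-m) * Y l (m-2*k) + of_real (k-2*l+m) * Y l m
          - of_real (3*l-m) * Y k (m-2*l) - of_real (l-2*k+m) * Y k m"
      using \<delta>(2) by simp
  next
    show "Y 0 m = 0" "Y 1 m = 0" for m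
      by (simp_all add: Y_def D_L0_eq_0[OF eps_in eps_pos] D_eps)
  next
    show "Y (-1) m = 0" if "m \<notin> {-3,-1,1}" for m
      using D_minus_eps_odd_box[OF T T', of m] that by (auto simp: Y_def \<delta>_def)
  qed
  show ?thesis
  proof (cases "D (L,-\<epsilon>) ((T,\<alpha>),(T',\<beta>)) = 0")
    case False
    have "(2 * -1 - \<alpha> / \<delta>) * \<delta> = - \<epsilon> - \<alpha>" using \<delta> by (simp add: algebra_simps)
    then have "\<beta> = (2 * -1 - \<alpha> / \<delta>) * \<delta>" using degree[OF minus_eps_in False] by linarith
    then show ?thesis using \<open>Y (-1) (\<alpha> / \<delta>) = 0\<close> \<delta>(2) by (simp add: Y_def)
  qed simp
qed

lemma D_minus_eps_eq_0: "D (L,-\<epsilon>) = (\<lambda>_. 0)"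
proof
  fix z :: "bas \<times> bas"
  obtain T \<alpha> T' \<beta> where z: "z = ((T,\<alpha>),(T',\<beta>))" by (metis prod.exhaust)
  show "D (L,-\<epsilon>) z = 0"
    using par_cases[of T] par_cases[of T'] D_minus_eps_mixed D_minus_eps_even_block D_minus_eps_odd_block
    unfolding z by fastforce
qed

end

end

theorem mainTheorem9:
  fixes \<Gamma> :: "real set" and s \<epsilon> :: real and d :: "bas \<Rightarrow> vvec"
  assumes "0 \<in> \<Gamma>" and "\<forall>x\<in>\<Gamma>. \<forall>y\<in>\<Gamma>. x + y \<in> \<Gamma>" and "\<forall>x\<in>\<Gamma>. - x \<in> \<Gamma>"
    and "\<Gamma> \<noteq> {0}" and "2 * s \<in> \<Gamma>"
    and "\<epsilon> \<in> \<Gamma>" and "\<epsilon> > 0"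
    and "d \<in> Der0 \<Gamma> s"
    and "d (L, \<epsilon>) = (\<lambda>_. 0)"
  shows "d (L, - \<epsilon>) = (\<lambda>_. 0)"
proof -
  interpret Witt_derivation \<Gamma> d
    using Der0_Witt_derivation[OF assms(8,2,3)] .
  show ?thesis using D_minus_eps_eq_0[OF assms(6,7,9)] .
qed

end
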